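(* Assume $S\times M\neq\emptyset$, let $(x,\lambda):[t_0,+\infty[\ \to X\times Y$ be a solution of (AHT), for each $t\ge t_0$ let $(x_t,\lambda_t)$ be the unique zero of $T_t=T+\varepsilon(t)\mathrm{id}$, and suppose there exists $t_+\ge t_0$ such that $\varepsilon^2(t)+\dot\varepsilon(t)\ge0$ and $2\varepsilon(t)\dot\varepsilon(t)+\ddot\varepsilon(t)\le0$ for all $t\ge t_+$. Then, as $t\to+\infty$, \[ \|(\dot x(t),\dot\lambda(t))+\varepsilon(t)((x(t),\lambda(t))-(x_t,\lambda_t))\|^2=\mathcal{O}\big(e^{-2\rho(t)}+\varepsilon^2(t)\big),\qquad \|T(x(t),\lambda(t))-T(x_t,\lambda_t)\|^2=\mathcal{O}\big(e^{-2\rho(t)}+\varepsilon^2(t)\big). \]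
   Context: $X,Y$ are real Hilbert spaces; $X\times Y$ carries the product inner product and norm $\|\cdot\|$. Standing assumptions: $f:X\to\mathbb{R}$ is convex and continuously differentiable with $\nabla f$ Lipschitz continuous on bounded subsets of $X$; $A:X\to Y$ is linear and continuous with adjoint $A^*$; $b\in Y$; $\varepsilon:[t_0,+\infty[\ \to\ ]0,+\infty[$ ($t_0\ge0$) is twice continuously differentiable with $\lim_{t\to+\infty}\varepsilon(t)=0$. $L(x,\lambda)=f(x)+\langle\lambda,Ax-b\rangle_Y$ and $T(x,\lambda)=(\nabla f(x)+A^*\lambda,\ b-Ax)$ (a monotone operator). $S$ is the set of optimal solutions of $\min\{f(x):Ax=b\}$, $M$ the set of Lagrange multipliers; $S\times M$ is the set of saddle points of $L$, equal to the zero set of $T$. The operator $T_t=T+\varepsilon(t)\mathrm{id}$ is $\varepsilon(t)$-strongly monotone and has a unique zero $(x_t,\lambda_t)$ (the saddle point of $L(x,\lambda)+\frac{\varepsilon(t)}{2}(\|x\|^2-\|\lambda\|^2)$). $\rho(t)=\int_{t_0}^t\varepsilon(\tau)\,d\tau$. (AHT) is the system $\dot x+\nabla f(x)+A^*\lambda+\varepsilon(t)x=0$, $\dot\lambda+b-Ax+\varepsilon(t)\lambda=0$; a solution is a continuously differentiable $(x,\lambda):[t_0,+\infty[\ \to X\times Y$ satisfying it on $[t_0,+\infty[$ (existence and uniqueness for every initial datum is assumed). *)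

theory Defs
  imports "HOL-Analysis.Analysis" "HOL-Library.Landau_Symbols"
begin

definition lagrangian ::
  "('a::real_inner \<Rightarrow> real) \<Rightarrow> ('a \<Rightarrow> 'b::real_inner) \<Rightarrow> 'b \<Rightarrow> 'a \<Rightarrow> 'b \<Rightarrow> real" where
  "lagrangian f A b x l = f x + inner l (A x - b)"

definition saddle_points ::
  "('a::real_inner \<Rightarrow> real) \<Rightarrow> ('a \<Rightarrow> 'b::real_inner) \<Rightarrow> 'b \<Rightarrow> ('a \<times> 'b) set" where
  "saddle_points f A b = {(x, l). \<forall>y m. lagrangian f A b x m \<le> lagrangian f A b x l
                                   \<and> lagrangian f A b x l \<le> lagrangian f A b y l}"

definition opt_solutions ::
  "('a::real_inner \<Rightarrow> real) \<Rightarrow> ('a \<Rightarrow> 'b::real_inner) \<Rightarrow> 'b \<Rightarrow> 'a set" where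
  "opt_solutions f A b = {x. A x = b \<and> (\<forall>y. A y = b \<longrightarrow> f x \<le> f y)}"

definition lagrange_multipliers ::
  "('a::real_inner \<Rightarrow> real) \<Rightarrow> ('a \<Rightarrow> 'b::real_inner) \<Rightarrow> 'b \<Rightarrow> 'b set" where
  "lagrange_multipliers f A b =
     {l. \<forall>x \<in> opt_solutions f A b. (x, l) \<in> saddle_points f A b}"

definition opT ::
  "('a \<Rightarrow> 'a::real_inner) \<Rightarrow> ('a \<Rightarrow> 'b::real_inner) \<Rightarrow> ('b \<Rightarrow> 'a) \<Rightarrow> 'b \<Rightarrow> 'a \<times> 'b \<Rightarrow> 'a \<times> 'b" where
  "opT gf A Astar b z = (gf (fst z) + Astar (snd z), b - A (fst z))"

end

theory Submission
  imports Defs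
begin

(* Write z = (x, \<lambda>). The flow reads z' = - T z - \<epsilon> z and the regularized zeros satisfy
   T z\<^sub>t = - \<epsilon> z\<^sub>t, so both quantities of the claim equal \<parallel>z' + \<epsilon> (z - z\<^sub>t)\<parallel>\<^sup>2.
   Testing the monotonicity of T against a zero of T shows that z and z\<^sub>t stay bounded.
   For the energy E = \<parallel>z'\<parallel>\<^sup>2 + \<epsilon>' \<parallel>z\<parallel>\<^sup>2, monotonicity of T and the decrease of \<epsilon>\<^sup>2 + \<epsilon>'
   make exp(2\<rho>) E nonincreasing; as z' need not be differentiable, this is proved for forward
   differences of step h and passed to the limit h \<rightarrow> 0+. Since \<epsilon>\<^sup>2 + \<epsilon>' \<ge> 0, we get
   \<parallel>z'\<parallel>\<^sup>2 \<le> C exp(-2\<rho>) - \<epsilon>' \<parallel>z\<parallel>\<^sup>2 \<le> C exp(-2\<rho>) + \<epsilon>\<^sup>2 \<parallel>z\<parallel>\<^sup>2. *)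

lemma convex_on_gradient_inequality:
  fixes f :: "'a::real_inner \<Rightarrow> real"
  assumes convex: "convex_on UNIV f"
    and grad: "\<And>z. (f has_derivative (\<lambda>h. inner (gf z) h)) (at z)"
  shows "inner (gf u) (v - u) \<le> f v - f u"
proof -
  define \<phi> where "\<phi> s = f (u + s *\<^sub>R (v - u))" for s :: real
  have "convex_on UNIV \<phi>"
  proof (rule convex_onI)
    fix t a c :: real assume t: "0 < t" "t < 1"
    have "\<phi> ((1 - t) *\<^sub>R a + t *\<^sub>R c)
        = f ((1 - t) *\<^sub>R (u + a *\<^sub>R (v - u)) + t *\<^sub>R (u + c *\<^sub>R (v - u)))"
      unfolding \<phi>_def by (simp add: algebra_simps)
    also have "\<dots> \<le> (1 - t) * \<phi> a + t * \<phi> c"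
      unfolding \<phi>_def using t by (intro convex_onD[OF convex]) auto
    finally show "\<phi> ((1 - t) *\<^sub>R a + t *\<^sub>R c) \<le> (1 - t) * \<phi> a + t * \<phi> c" .
  qed simp
  moreover have "(\<phi> has_real_derivative inner (gf u) (v - u)) (at 0)"
  proof -
    have "((\<lambda>s::real. u + s *\<^sub>R (v - u)) has_derivative (\<lambda>s. s *\<^sub>R (v - u))) (at 0)"
      by (auto intro!: derivative_eq_intros)
    from has_derivative_compose[OF this, of f "inner (gf u)"] grad[of u]
    show ?thesis
      unfolding \<phi>_def has_field_derivative_def
      by (simp add: mult.commute[of _ "inner (gf u) (v - u)"])
  qed
  ultimately have "inner (gf u) (v - u) * (1 - 0) \<le> \<phi> 1 - \<phi> 0"
    by (intro convex_on_imp_above_tangent) auto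
  then show ?thesis unfolding \<phi>_def by simp
qed

lemma convex_on_gradient_monotone:
  fixes f :: "'a::real_inner \<Rightarrow> real"
  assumes "convex_on UNIV f"
    and "\<And>z. (f has_derivative (\<lambda>h. inner (gf z) h)) (at z)"
  shows "0 \<le> inner (gf u - gf v) (u - v)"
  using convex_on_gradient_inequality[OF assms, of u v] convex_on_gradient_inequality[OF assms, of v u]
  by (simp add: inner_diff_left inner_diff_right)

lemma opT_monotone:
  fixes f :: "'a::real_inner \<Rightarrow> real" and A :: "'a \<Rightarrow> 'b::real_inner"
  assumes convex: "convex_on UNIV f"
    and grad: "\<And>z. (f has_derivative (\<lambda>h. inner (gf z) h)) (at z)"
    and A_lin: "bounded_linear A"
    and A_adj: "\<And>u v. inner (A u) v = inner u (Astar v)"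
  shows "0 \<le> inner (opT gf A Astar b p - opT gf A Astar b q) (p - q)"
proof -
  obtain x1 l1 x2 l2 where p: "p = (x1, l1)" and q: "q = (x2, l2)" by (cases p, cases q) auto
  have A_diff: "A x1 - A x2 = A (x1 - x2)"
    using A_lin by (simp add: linear_diff bounded_linear.linear)
  have "inner (Astar l1 - Astar l2) (x1 - x2)
      = inner (x1 - x2) (Astar l1) - inner (x1 - x2) (Astar l2)"
    by (simp add: inner_diff_left inner_diff_right inner_commute)
  also have "\<dots> = inner (A (x1 - x2)) (l1 - l2)"
    by (simp add: A_adj[symmetric] inner_diff_right)
  finally have skew: "inner (Astar l1 - Astar l2) (x1 - x2) = inner (A (x1 - x2)) (l1 - l2)" .
  have "opT gf A Astar b p - opT gf A Astar b q
      = ((gf x1 - gf x2) + (Astar l1 - Astar l2), - A (x1 - x2))"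
    unfolding p q opT_def by (simp add: algebra_simps A_diff[symmetric])
  then show ?thesis
    using convex_on_gradient_monotone[OF convex grad, of x1 x2]
    unfolding p q by (simp add: inner_add_left skew)
qed

lemma opT_saddle_point_zero:
  fixes f :: "'a::real_inner \<Rightarrow> real" and A :: "'a \<Rightarrow> 'b::real_inner"
  assumes grad: "\<And>z. (f has_derivative (\<lambda>h. inner (gf z) h)) (at z)"
    and A_lin: "bounded_linear A"
    and A_adj: "\<And>u v. inner (A u) v = inner u (Astar v)"
    and xs: "xs \<in> opt_solutions f A b" and ls: "ls \<in> lagrange_multipliers f A b"
  shows "opT gf A Astar b (xs, ls) = 0"
proof -
  have feasible: "A xs = b" using xs by (simp add: opt_solutions_def)
  have minimal: "\<forall>y\<in>UNIV. lagrangian f A b xs ls \<le> lagrangian f A b y ls"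
    using xs ls by (simp add: lagrange_multipliers_def saddle_points_def)
  have "((\<lambda>y. inner ls (A y) - inner ls b) has_derivative (\<lambda>h. inner ls (A h) - 0)) (at xs)"
    by (intro has_derivative_diff has_derivative_const
          bounded_linear.has_derivative[OF bounded_linear_compose[OF bounded_linear_inner_right A_lin]]
          has_derivative_ident)
  then have "((\<lambda>y. lagrangian f A b y ls) has_derivative (\<lambda>h. inner (gf xs) h + inner ls (A h))) (at xs)"
    unfolding lagrangian_def by (intro has_derivative_add grad) (simp add: inner_diff_right)
  then have stationary: "(\<lambda>h. inner (gf xs) h + inner ls (A h)) = (\<lambda>h. 0)"
    by (rule differential_zero_maxmin[of xs UNIV, rotated 2]) (use minimal in auto)
  have "inner (gf xs + Astar ls) h = 0" for h
  proof -
    have "inner (gf xs) h + inner ls (A h) = 0" using fun_cong[OF stationary, of h] by simp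
    then show ?thesis using A_adj[of h ls] by (simp add: inner_add_left inner_add_right inner_commute)
  qed
  then have "gf xs + Astar ls = 0" by (metis inner_eq_zero_iff)
  then show ?thesis by (simp add: opT_def feasible zero_prod_def)
qed

lemma regularized_zero_norm_le:
  fixes T :: "'v::real_inner \<Rightarrow> 'v"
  assumes monotone: "\<And>p q. 0 \<le> inner (T p - T q) (p - q)"
    and zero: "T zs = 0" and regularized_zero: "T z + e *\<^sub>R z = 0" and "0 < e"
  shows "norm z \<le> norm zs"
proof -
  have "0 \<le> inner (T z - T zs) (z - zs)" by (rule monotone)
  also have "\<dots> = - e * (inner z z - inner z zs)"
    using regularized_zero zero
    by (simp add: eq_neg_iff_add_eq_0[symmetric] inner_diff_right right_diff_distrib)
  finally have "(norm z)\<^sup>2 \<le> inner z zs"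
    using \<open>0 < e\<close> by (simp add: mult_le_0_iff power2_norm_eq_inner)
  also have "\<dots> \<le> norm z * norm zs" by (rule norm_cauchy_schwarz)
  finally show ?thesis
    by (cases "norm z = 0") (auto simp: power2_eq_square)
qed

lemma DERIV_within_nonpos_imp_nonincreasing:
  fixes Q :: "real \<Rightarrow> real"
  assumes "a \<le> s" "s \<le> t"
    and deriv: "\<And>u. a \<le> u \<Longrightarrow> \<exists>y. (Q has_real_derivative y) (at u within {a..}) \<and> y \<le> 0"
  shows "Q t \<le> Q s"
proof (rule DERIV_nonpos_imp_decreasing_open[OF \<open>s \<le> t\<close>])
  fix u assume u: "s < u" "u < t"
  have "at u within {a..} = at u"
    using u \<open>a \<le> s\<close> by (intro at_within_interior) auto
  then show "\<exists>y. (Q has_real_derivative y) (at u) \<and> y \<le> 0"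
    using deriv[of u] u \<open>a \<le> s\<close> by auto
next
  have "continuous (at u within {a..}) Q" if "a \<le> u" for u
    using deriv[OF that] DERIV_continuous by blast
  then have "continuous_on {a..} Q"
    by (simp add: continuous_on_eq_continuous_within)
  then show "continuous_on {s..t} Q"
    by (rule continuous_on_subset) (use \<open>a \<le> s\<close> in auto)
qed

lemma square_plus_derivative_nonincreasing:
  fixes e e' e'' :: "real \<Rightarrow> real"
  assumes e_deriv: "\<And>t. a \<le> t \<Longrightarrow> (e has_real_derivative e' t) (at t within {a..})"
    and e'_deriv: "\<And>t. a \<le> t \<Longrightarrow> (e' has_real_derivative e'' t) (at t within {a..})"
    and "a \<le> b" and nonpos: "\<And>t. b \<le> t \<Longrightarrow> 2 * e t * e' t + e'' t \<le> 0"
    and "b \<le> u" "u \<le> v"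
  shows "(e v)\<^sup>2 + e' v \<le> (e u)\<^sup>2 + e' u"
proof (rule DERIV_within_nonpos_imp_nonincreasing[OF \<open>b \<le> u\<close> \<open>u \<le> v\<close>])
  fix t assume "b \<le> t"
  then have "a \<le> t" and sub: "{b..} \<subseteq> {a..}" using \<open>a \<le> b\<close> by auto
  have "((\<lambda>t. (e t)\<^sup>2 + e' t) has_real_derivative 2 * e t * e' t + e'' t) (at t within {b..})"
    by (rule DERIV_cong[OF DERIV_add[OF DERIV_power[OF DERIV_subset[OF e_deriv[OF \<open>a \<le> t\<close>] sub]]
          DERIV_subset[OF e'_deriv[OF \<open>a \<le> t\<close>] sub]]]) simp
  with nonpos[OF \<open>b \<le> t\<close>]
  show "\<exists>y. ((\<lambda>t. (e t)\<^sup>2 + e' t) has_real_derivative y) (at t within {b..}) \<and> y \<le> 0"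
    by (intro exI conjI)
qed

lemma integral_has_real_derivative_atLeast:
  assumes "continuous_on {a..} g" and "a \<le> t"
  shows "((\<lambda>u. integral {a..u} g) has_real_derivative g t) (at t within {a..})"
proof -
  have nhd: "at t within {a..} = at t within {a..t+1}"
    by (rule at_within_nhd[where S="{t-1<..<t+1}"]) auto
  have "continuous_on {a..t+1} g"
    by (rule continuous_on_subset[OF assms(1)]) auto
  from integral_has_real_derivative[OF this] show ?thesis
    unfolding nhd using \<open>a \<le> t\<close> by auto
qed

lemma has_vector_derivative_shift:
  fixes F :: "real \<Rightarrow> 'v::real_normed_vector"
  assumes deriv: "\<And>s. a \<le> s \<Longrightarrow> (F has_vector_derivative F' s) (at s within {a..})"
    and "0 < h" "a \<le> u"
  shows "((\<lambda>u. F (u + h)) has_vector_derivative F' (u + h)) (at u within S)"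
proof -
  have "at (u + h) within {a..} = at (u + h)"
    using assms by (intro at_within_interior) auto
  then have F_deriv: "(F has_vector_derivative F' (u + h)) (at (u + h))"
    using deriv[of "u + h"] assms by auto
  have "((\<lambda>u. u + h) has_vector_derivative 1) (at u within S)"
    by (auto intro!: derivative_eq_intros simp: has_vector_derivative_def)
  from vector_diff_chain_within[OF this has_vector_derivative_at_within[OF F_deriv]]
  show ?thesis by (simp add: o_def)
qed

lemma has_real_derivative_shift:
  fixes F :: "real \<Rightarrow> real"
  assumes "\<And>s. a \<le> s \<Longrightarrow> (F has_real_derivative F' s) (at s within {a..})"
    and "0 < h" "a \<le> u"
  shows "((\<lambda>u. F (u + h)) has_real_derivative F' (u + h)) (at u within S)"
  using has_vector_derivative_shift[of a F F' h u S] assms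
  by (simp add: has_real_derivative_iff_has_vector_derivative)

lemma norm_sq_has_real_derivative:
  assumes "(D has_vector_derivative D') (at u within S)"
  shows "((\<lambda>u. (norm (D u))\<^sup>2) has_real_derivative 2 * inner (D u) D') (at u within S)"
proof -
  have "((\<lambda>u. inner (D u) (D u)) has_derivative
      (\<lambda>h. inner (D u) (h *\<^sub>R D') + inner (h *\<^sub>R D') (D u))) (at u within S)"
    using assms unfolding has_vector_derivative_def by (intro has_derivative_inner)
  moreover have "(\<lambda>h. inner (D u) (h *\<^sub>R D') + inner (h *\<^sub>R D') (D u)) = (*) (2 * inner (D u) D')"
    by (auto simp: inner_commute algebra_simps)
  ultimately show ?thesis
    unfolding has_field_derivative_def power2_norm_eq_inner by simp
qed

lemma right_difference_quotient_tendsto: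
  fixes f :: "real \<Rightarrow> 'v::real_normed_vector"
  assumes "(f has_vector_derivative f') (at s within {a..})" and "a \<le> s"
  shows "((\<lambda>h. (1 / h) *\<^sub>R (f (s + h) - f s)) \<longlongrightarrow> f') (at_right 0)"
proof -
  have "((\<lambda>y. (1 / norm (y - s)) *\<^sub>R (f y - (f s + (y - s) *\<^sub>R f'))) \<longlongrightarrow> 0) (at s within {a..})"
    using assms(1) unfolding has_vector_derivative_def has_derivative_within by auto
  then have "((\<lambda>y. (1 / norm (y - s)) *\<^sub>R (f y - (f s + (y - s) *\<^sub>R f'))) \<longlongrightarrow> 0) (at_right s)"
    by (rule tendsto_mono[OF at_le, rotated]) (use assms(2) in auto)
  then have "((\<lambda>y. (1 / norm (y - s)) *\<^sub>R (f y - (f s + (y - s) *\<^sub>R f')) + f') \<longlongrightarrow> 0 + f') (at_right s)"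
    by (rule tendsto_add[OF _ tendsto_const])
  moreover have "\<forall>\<^sub>F y in at_right s.
      (1 / norm (y - s)) *\<^sub>R (f y - (f s + (y - s) *\<^sub>R f')) + f' = (1 / (y - s)) *\<^sub>R (f y - f s)"
    using eventually_at_right_less[of s]
    by eventually_elim (simp add: scaleR_diff_right scaleR_add_right)
  ultimately have "((\<lambda>y. (1 / (y - s)) *\<^sub>R (f y - f s)) \<longlongrightarrow> f') (at_right s)"
    by (simp add: Lim_transform_eventually)
  then show ?thesis
    unfolding filterlim_at_right_to_0[of _ _ s] by (simp add: add.commute)
qed

lemma continuous_on_atLeast_right_shift_tendsto:
  fixes f :: "real \<Rightarrow> 'v::topological_space"
  assumes "continuous_on {a..} f" and "a \<le> s"
  shows "((\<lambda>h. f (s + h)) \<longlongrightarrow> f s) (at_right 0)"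
proof -
  have "(f \<longlongrightarrow> f s) (at s within {a..})"
    using assms by (simp add: continuous_on_def)
  then have "(f \<longlongrightarrow> f s) (at_right s)"
    by (rule tendsto_mono[OF at_le, rotated]) (use assms(2) in auto)
  then show ?thesis
    unfolding filterlim_at_right_to_0[of _ _ s] by (simp add: add.commute)
qed

lemma norm_add_squared_le:
  fixes a b :: "'v::real_normed_vector"
  shows "(norm (a + b))\<^sup>2 \<le> 2 * (norm a)\<^sup>2 + 2 * (norm b)\<^sup>2"
proof -
  have "(norm (a + b))\<^sup>2 \<le> (norm a + norm b)\<^sup>2"
    by (simp add: power_mono norm_triangle_ineq)
  also have "\<dots> \<le> 2 * (norm a)\<^sup>2 + 2 * (norm b)\<^sup>2"
    using zero_le_power2[of "norm a - norm b"] by (simp add: power2_sum power2_diff)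
  finally show ?thesis .
qed

locale regularized_monotone_flow =
  fixes T :: "'v::real_inner \<Rightarrow> 'v"
    and eps eps' :: "real \<Rightarrow> real"
    and t0 :: real
    and Z Z' :: "real \<Rightarrow> 'v"
  assumes monotone: "\<And>p q. 0 \<le> inner (T p - T q) (p - q)"
    and eps_pos: "\<And>t. t0 \<le> t \<Longrightarrow> 0 < eps t"
    and eps_deriv: "\<And>t. t0 \<le> t \<Longrightarrow> (eps has_real_derivative eps' t) (at t within {t0..})"
    and Z_deriv: "\<And>t. t0 \<le> t \<Longrightarrow> (Z has_vector_derivative Z' t) (at t within {t0..})"
    and flow_equation: "\<And>t. t0 \<le> t \<Longrightarrow> Z' t + T (Z t) + eps t *\<^sub>R Z t = 0"
begin

definition rho :: "real \<Rightarrow> real" where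
  "rho t = integral {t0..t} eps"

definition norm_sq_integral :: "real \<Rightarrow> real" where
  "norm_sq_integral t = integral {t0..t} (\<lambda>s. (norm (Z s))\<^sup>2)"

lemma velocity_eq: "t0 \<le> t \<Longrightarrow> Z' t = - T (Z t) - eps t *\<^sub>R Z t"
  using flow_equation[of t] by (simp add: eq_neg_iff_add_eq_0 algebra_simps)

lemma eps_continuous: "continuous_on {t0..} eps"
  using eps_deriv by (auto simp: continuous_on_eq_continuous_within intro: DERIV_continuous)

lemma Z_continuous: "continuous_on {t0..} Z"
  using Z_deriv
  by (auto simp: continuous_on_eq_continuous_within intro: has_vector_derivative_continuous)

lemma rho_deriv: "t0 \<le> t \<Longrightarrow> (rho has_real_derivative eps t) (at t within {t0..})"
  unfolding rho_def[abs_def] by (rule integral_has_real_derivative_atLeast[OF eps_continuous])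

lemma rho_continuous: "continuous_on {t0..} rho"
  using rho_deriv by (auto simp: continuous_on_eq_continuous_within intro: DERIV_continuous)

lemma rho_t0: "rho t0 = 0"
  by (simp add: rho_def)

lemma rho_nonneg: "t0 \<le> t \<Longrightarrow> 0 \<le> rho t"
  unfolding rho_def using eps_pos
  by (intro integral_nonneg integrable_continuous_interval continuous_on_subset[OF eps_continuous])
     (auto intro: less_imp_le)

lemma norm_sq_integral_deriv:
  "t0 \<le> t \<Longrightarrow> (norm_sq_integral has_real_derivative (norm (Z t))\<^sup>2) (at t within {t0..})"
  unfolding norm_sq_integral_def[abs_def]
  by (rule integral_has_real_derivative_atLeast) (intro continuous_intros Z_continuous)


lemma norm_sq_integral_mono:
  assumes "t0 \<le> u" "u \<le> v"
  shows "norm_sq_integral u \<le> norm_sq_integral v"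
proof -
  have "(\<lambda>t. - norm_sq_integral t) v \<le> (\<lambda>t. - norm_sq_integral t) u"
  proof (rule DERIV_within_nonpos_imp_nonincreasing[OF assms])
    fix t assume "t0 \<le> t"
    from DERIV_minus[OF norm_sq_integral_deriv[OF this]]
    show "\<exists>y. ((\<lambda>t. - norm_sq_integral t) has_real_derivative y) (at t within {t0..}) \<and> y \<le> 0"
      by (intro exI conjI) auto
  qed
  then show ?thesis by simp
qed

lemma distance_to_zero_decay:
  assumes zero: "T zs = 0" and "t0 \<le> t"
  shows "exp (rho t) * ((norm (Z t - zs))\<^sup>2 - (norm zs)\<^sup>2) \<le> (norm (Z t0 - zs))\<^sup>2 - (norm zs)\<^sup>2"
proof -
  define c where "c = (norm zs)\<^sup>2"
  define H where "H t = (norm (Z t - zs))\<^sup>2" for t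
  have H_deriv: "(H has_real_derivative 2 * inner (Z t - zs) (Z' t)) (at t within {t0..})"
    if "t0 \<le> t" for t
    using norm_sq_has_real_derivative[OF has_vector_derivative_diff[OF Z_deriv[OF that]
        has_vector_derivative_const]]
    unfolding H_def[abs_def] by simp
  have "exp (rho t) * (H t - c) \<le> exp (rho t0) * (H t0 - c)"
  proof (rule DERIV_within_nonpos_imp_nonincreasing[OF order.refl \<open>t0 \<le> t\<close>])
    fix u assume u: "t0 \<le> u"
    have identity: "eps u * (H u - c) + 2 * inner (Z u - zs) (Z' u)
        = - 2 * inner (T (Z u) - T zs) (Z u - zs) - eps u * (norm (Z u))\<^sup>2"
      by (simp add: velocity_eq[OF u] zero H_def c_def power2_norm_eq_inner inner_diff_left
          inner_diff_right inner_commute algebra_simps)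
    have "exp (rho u) * eps u * (H u - c) + (2 * inner (Z u - zs) (Z' u) - 0) * exp (rho u)
        = exp (rho u) * (- 2 * inner (T (Z u) - T zs) (Z u - zs) - eps u * (norm (Z u))\<^sup>2)"
      unfolding identity[symmetric] by (simp add: algebra_simps)
    also have "\<dots> \<le> 0"
    proof -
      have "0 \<le> eps u * (norm (Z u))\<^sup>2" using eps_pos[OF u] by simp
      then show ?thesis using monotone[of "Z u" zs] by (intro mult_nonneg_nonpos) auto
    qed
    finally show "\<exists>y. ((\<lambda>t. exp (rho t) * (H t - c)) has_real_derivative y) (at u within {t0..})
        \<and> y \<le> 0"
      using DERIV_mult[OF DERIV_chain2[OF DERIV_exp rho_deriv[OF u]]
          DERIV_diff[OF H_deriv[OF u] DERIV_const]]
      by (intro exI conjI)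
  qed
  then show ?thesis by (simp add: H_def c_def rho_t0)
qed

lemma trajectory_bounded:
  assumes zero: "T zs = 0"
  shows "bounded (Z ` {t0..})"
proof -
  define C where "C = (norm zs)\<^sup>2 + \<bar>(norm (Z t0 - zs))\<^sup>2 - (norm zs)\<^sup>2\<bar>"
  have "(norm (Z t - zs))\<^sup>2 \<le> C" if "t0 \<le> t" for t
  proof -
    define d where "d = (norm (Z t - zs))\<^sup>2 - (norm zs)\<^sup>2"
    have "d \<le> \<bar>(norm (Z t0 - zs))\<^sup>2 - (norm zs)\<^sup>2\<bar>"
    proof (cases "0 < d")
      case True
      then have "d \<le> exp (rho t) * d"
        using rho_nonneg[OF that] by (simp add: mult_le_cancel_right1)
      also have "\<dots> \<le> \<bar>(norm (Z t0 - zs))\<^sup>2 - (norm zs)\<^sup>2\<bar>"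
        using distance_to_zero_decay[OF zero that] by (simp add: d_def)
      finally show ?thesis .
    qed simp
    then show ?thesis by (simp add: C_def d_def)
  qed
  then have "norm (Z t) \<le> sqrt C + norm zs" if "t0 \<le> t" for t
    using real_le_rsqrt[of "norm (Z t - zs)" C] norm_triangle_sub[of "Z t" zs] that by simp
  then show ?thesis unfolding bounded_iff by blast
qed

definition energy :: "real \<Rightarrow> real" where
  "energy t = (norm (Z' t))\<^sup>2 + eps' t * (norm (Z t))\<^sup>2"

(* h\<^sup>2 exp(2 rho) energy, with the derivatives replaced by forward differences of step h. *)
definition increment :: "real \<Rightarrow> real \<Rightarrow> real" where
  "increment h u = exp (rho (u + h) + rho u) * ((norm (Z (u + h) - Z u))\<^sup>2
     + (eps (u + h) - eps u) * (norm_sq_integral (u + h) - norm_sq_integral u))"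

(* The derivative of increment h at u, for Zh = Z (u + h), Z0 = Z u, a = eps (u + h), c = eps u,
   eh = eps' (u + h), e = eps' u, \<Phi> the increment of norm_sq_integral and W the weight. *)
lemma increment_derivative_nonpos:
  assumes "Z'h = - T Zh - a *\<^sub>R Zh" and "Z'0 = - T Z0 - c *\<^sub>R Z0"
    and "0 \<le> \<Phi>" and "a\<^sup>2 + eh \<le> c\<^sup>2 + e" and "0 < W"
  shows "W * (a + c) * ((norm (Zh - Z0))\<^sup>2 + (a - c) * \<Phi>)
    + (2 * inner (Zh - Z0) (Z'h - Z'0) + ((eh - e) * \<Phi> + ((norm Zh)\<^sup>2 - (norm Z0)\<^sup>2) * (a - c))) * W
    \<le> 0"
proof -
  define M where "M = inner (T Zh - T Z0) (Zh - Z0)"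
  define P where "P = inner Zh Zh"
  define R where "R = inner Zh Z0"
  define S where "S = inner Z0 Z0"
  have velocity_term: "inner (Zh - Z0) (Z'h - Z'0) = - M - (a * P - (a + c) * R + c * S)"
  proof -
    have "Z'h - Z'0 = - (T Zh - T Z0) - (a *\<^sub>R Zh - c *\<^sub>R Z0)"
      by (simp add: assms(1,2) algebra_simps)
    then have "inner (Zh - Z0) (Z'h - Z'0)
        = - inner (Zh - Z0) (T Zh - T Z0) - inner (Zh - Z0) (a *\<^sub>R Zh - c *\<^sub>R Z0)"
      by (simp add: inner_diff_right)
    also have "inner (Zh - Z0) (T Zh - T Z0) = M" by (simp add: M_def inner_commute)
    also have "inner (Zh - Z0) (a *\<^sub>R Zh - c *\<^sub>R Z0) = a * P - (a + c) * R + c * S"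
      by (simp add: P_def R_def S_def inner_diff_left inner_diff_right inner_commute algebra_simps)
    finally show ?thesis .
  qed
  have distance: "(norm (Zh - Z0))\<^sup>2 = P - 2 * R + S"
    by (simp add: P_def R_def S_def power2_norm_eq_inner inner_diff_left inner_diff_right
        inner_commute)
  have norms: "(norm Zh)\<^sup>2 = P" "(norm Z0)\<^sup>2 = S"
    by (simp_all add: P_def S_def power2_norm_eq_inner)
  have "W * (a + c) * ((norm (Zh - Z0))\<^sup>2 + (a - c) * \<Phi>)
    + (2 * inner (Zh - Z0) (Z'h - Z'0) + ((eh - e) * \<Phi> + ((norm Zh)\<^sup>2 - (norm Z0)\<^sup>2) * (a - c))) * W
    = W * (\<Phi> * ((a\<^sup>2 + eh) - (c\<^sup>2 + e))) - 2 * W * M"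
    unfolding velocity_term distance norms by (simp add: algebra_simps power2_eq_square)
  also have "\<dots> \<le> 0"
  proof -
    have "W * (\<Phi> * ((a\<^sup>2 + eh) - (c\<^sup>2 + e))) \<le> 0"
      using assms(3-5) by (simp add: mult_nonneg_nonpos)
    moreover have "0 \<le> 2 * W * M" using \<open>0 < W\<close> monotone by (simp add: M_def)
    ultimately show ?thesis by linarith
  qed
  finally show ?thesis .
qed

lemma increment_quotient_tendsto:
  assumes "t0 \<le> u"
  shows "((\<lambda>h. increment h u / h\<^sup>2) \<longlongrightarrow> exp (2 * rho u) * energy u) (at_right 0)"
proof -
  have eps_quotient: "((\<lambda>h. (1 / h) * (eps (u + h) - eps u)) \<longlongrightarrow> eps' u) (at_right 0)"
    using right_difference_quotient_tendsto[OF eps_deriv[OF assms,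
        unfolded has_real_derivative_iff_has_vector_derivative] assms] by simp
  have J_quotient: "((\<lambda>h. (1 / h) * (norm_sq_integral (u + h) - norm_sq_integral u))
      \<longlongrightarrow> (norm (Z u))\<^sup>2) (at_right 0)"
    using right_difference_quotient_tendsto[OF norm_sq_integral_deriv[OF assms,
        unfolded has_real_derivative_iff_has_vector_derivative] assms] by simp
  have "((\<lambda>h. exp (rho (u + h) + rho u) * ((norm ((1 / h) *\<^sub>R (Z (u + h) - Z u)))\<^sup>2
      + ((1 / h) * (eps (u + h) - eps u))
        * ((1 / h) * (norm_sq_integral (u + h) - norm_sq_integral u))))
      \<longlongrightarrow> exp (rho u + rho u) * ((norm (Z' u))\<^sup>2 + eps' u * (norm (Z u))\<^sup>2)) (at_right 0)"
    by (intro tendsto_intros continuous_on_atLeast_right_shift_tendsto[OF rho_continuous assms]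
        right_difference_quotient_tendsto[OF Z_deriv[OF assms] assms] eps_quotient J_quotient)
  moreover have "\<forall>\<^sub>F h in at_right 0. exp (rho (u + h) + rho u)
      * ((norm ((1 / h) *\<^sub>R (Z (u + h) - Z u)))\<^sup>2 + ((1 / h) * (eps (u + h) - eps u))
        * ((1 / h) * (norm_sq_integral (u + h) - norm_sq_integral u)))
      = increment h u / h\<^sup>2"
    using eventually_at_right_less[of 0]
  proof eventually_elim
    case (elim h)
    then have norm_quotient:
      "(norm ((1 / h) *\<^sub>R (Z (u + h) - Z u)))\<^sup>2 = (norm (Z (u + h) - Z u))\<^sup>2 / h\<^sup>2"
      by (simp add: power_divide)
    show ?case
      using elim unfolding norm_quotient increment_def by (simp add: power2_eq_square field_simps)
  qed
  ultimately have "((\<lambda>h. increment h u / h\<^sup>2) \<longlongrightarrow>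
      exp (rho u + rho u) * ((norm (Z' u))\<^sup>2 + eps' u * (norm (Z u))\<^sup>2)) (at_right 0)"
    by (rule Lim_transform_eventually)
  then show ?thesis unfolding mult_2 energy_def .
qed

context
  fixes tp :: real
  assumes tp: "t0 \<le> tp"
    and sq_plus_deriv_antitone:
      "\<And>u v. tp \<le> u \<Longrightarrow> u \<le> v \<Longrightarrow> (eps v)\<^sup>2 + eps' v \<le> (eps u)\<^sup>2 + eps' u"
begin

lemma increment_nonincreasing:
  assumes "0 < h" "tp \<le> s" "s \<le> t"
  shows "increment h t \<le> increment h s"
proof (rule DERIV_within_nonpos_imp_nonincreasing[OF \<open>tp \<le> s\<close> \<open>s \<le> t\<close>])
  fix u assume "tp \<le> u"
  then have u: "t0 \<le> u" and uh: "t0 \<le> u + h" and sub: "{tp..} \<subseteq> {t0..}"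
    using tp \<open>0 < h\<close> by auto
  have dW: "((\<lambda>u. exp (rho (u + h) + rho u)) has_real_derivative
      exp (rho (u + h) + rho u) * (eps (u + h) + eps u)) (at u within {tp..})"
    by (intro DERIV_chain2[OF DERIV_exp] DERIV_add has_real_derivative_shift[OF rho_deriv \<open>0 < h\<close> u]
        DERIV_subset[OF rho_deriv[OF u] sub])
  have dD: "((\<lambda>u. (norm (Z (u + h) - Z u))\<^sup>2) has_real_derivative
      2 * inner (Z (u + h) - Z u) (Z' (u + h) - Z' u)) (at u within {tp..})"
    by (intro norm_sq_has_real_derivative has_vector_derivative_diff
        has_vector_derivative_shift[OF Z_deriv \<open>0 < h\<close> u]
        has_vector_derivative_within_subset[OF Z_deriv[OF u] sub])
  have de: "((\<lambda>u. eps (u + h) - eps u) has_real_derivative eps' (u + h) - eps' u)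
      (at u within {tp..})"
    by (intro DERIV_diff has_real_derivative_shift[OF eps_deriv \<open>0 < h\<close> u]
        DERIV_subset[OF eps_deriv[OF u] sub])
  have dJ: "((\<lambda>u. norm_sq_integral (u + h) - norm_sq_integral u) has_real_derivative
      (norm (Z (u + h)))\<^sup>2 - (norm (Z u))\<^sup>2) (at u within {tp..})"
    by (intro DERIV_diff has_real_derivative_shift[OF norm_sq_integral_deriv \<open>0 < h\<close> u]
        DERIV_subset[OF norm_sq_integral_deriv[OF u] sub])
  have "0 \<le> norm_sq_integral (u + h) - norm_sq_integral u"
    using norm_sq_integral_mono[OF u, of "u + h"] \<open>0 < h\<close> by simp
  moreover have "(eps (u + h))\<^sup>2 + eps' (u + h) \<le> (eps u)\<^sup>2 + eps' u"
    using sq_plus_deriv_antitone[OF \<open>tp \<le> u\<close>, of "u + h"] \<open>0 < h\<close> by simp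
  ultimately show "\<exists>y. (increment h has_real_derivative y) (at u within {tp..}) \<and> y \<le> 0"
    unfolding increment_def[abs_def]
    using DERIV_mult[OF dW DERIV_add[OF dD DERIV_mult[OF de dJ]]]
      increment_derivative_nonpos[OF velocity_eq[OF uh] velocity_eq[OF u]]
    by (intro exI conjI) auto
qed

lemma energy_decay:
  assumes "tp \<le> s" "s \<le> t"
  shows "exp (2 * rho t) * energy t \<le> exp (2 * rho s) * energy s"
proof (rule tendsto_le[OF trivial_limit_at_right_real])
  show "((\<lambda>h. increment h s / h\<^sup>2) \<longlongrightarrow> exp (2 * rho s) * energy s) (at_right 0)"
    and "((\<lambda>h. increment h t / h\<^sup>2) \<longlongrightarrow> exp (2 * rho t) * energy t) (at_right 0)"
    using tp assms by (auto intro!: increment_quotient_tendsto)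
  show "\<forall>\<^sub>F h in at_right 0. increment h t / h\<^sup>2 \<le> increment h s / h\<^sup>2"
    using eventually_at_right_less[of 0]
    by eventually_elim (intro divide_right_mono increment_nonincreasing; use assms in simp)
qed

lemma velocity_sq_bound:
  assumes sq_plus_deriv_nonneg: "\<And>t. tp \<le> t \<Longrightarrow> 0 \<le> (eps t)\<^sup>2 + eps' t"
    and B: "\<And>t. t0 \<le> t \<Longrightarrow> norm (Z t) \<le> B" and "tp \<le> t"
  shows "(norm (Z' t))\<^sup>2 \<le> \<bar>exp (2 * rho tp) * energy tp\<bar> * exp (- 2 * rho t) + B\<^sup>2 * (eps t)\<^sup>2"
proof -
  have "t0 \<le> t" using tp \<open>tp \<le> t\<close> by simp
  have "exp (2 * rho t) * energy t \<le> exp (2 * rho tp) * energy tp"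
    by (rule energy_decay[OF order.refl \<open>tp \<le> t\<close>])
  then have "(norm (Z' t))\<^sup>2 + eps' t * (norm (Z t))\<^sup>2 \<le> exp (- 2 * rho t) * (exp (2 * rho tp) * energy tp)"
    by (simp add: energy_def exp_minus field_simps)
  moreover have "- (eps' t * (norm (Z t))\<^sup>2) \<le> B\<^sup>2 * (eps t)\<^sup>2"
  proof -
    have "- (eps' t * (norm (Z t))\<^sup>2) \<le> (eps t)\<^sup>2 * (norm (Z t))\<^sup>2"
      using mult_right_mono[of "- eps' t" "(eps t)\<^sup>2" "(norm (Z t))\<^sup>2"]
        sq_plus_deriv_nonneg[OF \<open>tp \<le> t\<close>]
      by simp
    also have "\<dots> \<le> (eps t)\<^sup>2 * B\<^sup>2"
      using B[OF \<open>t0 \<le> t\<close>] by (intro mult_left_mono power_mono) auto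
    finally show ?thesis by (simp add: mult.commute)
  qed
  moreover have "exp (- 2 * rho t) * (exp (2 * rho tp) * energy tp)
      \<le> \<bar>exp (2 * rho tp) * energy tp\<bar> * exp (- 2 * rho t)"
    by simp
  ultimately show ?thesis by linarith
qed

context
  fixes zs :: 'v and Zt :: "real \<Rightarrow> 'v"
  assumes zero: "T zs = 0"
    and regularized_zero: "\<And>t. t0 \<le> t \<Longrightarrow> T (Zt t) + eps t *\<^sub>R Zt t = 0"
    and sq_plus_deriv_nonneg: "\<And>t. tp \<le> t \<Longrightarrow> 0 \<le> (eps t)\<^sup>2 + eps' t"
begin

lemma velocity_deviation_bigo:
  "(\<lambda>t. (norm (Z' t + eps t *\<^sub>R (Z t - Zt t)))\<^sup>2) \<in> O[at_top](\<lambda>t. exp (- 2 * rho t) + (eps t)\<^sup>2)"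
proof -
  obtain B where B: "\<And>t. t0 \<le> t \<Longrightarrow> norm (Z t) \<le> B"
    using trajectory_bounded[OF zero] by (auto simp: bounded_iff)
  define K where "K = 2 * \<bar>exp (2 * rho tp) * energy tp\<bar> + 2 * B\<^sup>2 + 2 * (B + norm zs)\<^sup>2"
  have "(norm (Z' t + eps t *\<^sub>R (Z t - Zt t)))\<^sup>2 \<le> K * (exp (- 2 * rho t) + (eps t)\<^sup>2)"
    if "tp \<le> t" for t
  proof -
    have t: "t0 \<le> t" using that tp by simp
    have "norm (Zt t) \<le> norm zs"
      by (rule regularized_zero_norm_le[OF monotone zero regularized_zero[OF t] eps_pos[OF t]])
    then have "norm (Z t - Zt t) \<le> B + norm zs"
      using B[OF t] norm_triangle_ineq4[of "Z t" "Zt t"] by simp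
    then have deviation: "(norm (eps t *\<^sub>R (Z t - Zt t)))\<^sup>2 \<le> (B + norm zs)\<^sup>2 * (eps t)\<^sup>2"
      by (simp add: power_mult_distrib mult.commute mult_left_mono power_mono)
    have "(norm (Z' t + eps t *\<^sub>R (Z t - Zt t)))\<^sup>2
        \<le> 2 * (norm (Z' t))\<^sup>2 + 2 * (norm (eps t *\<^sub>R (Z t - Zt t)))\<^sup>2"
      by (rule norm_add_squared_le)
    also have "\<dots> \<le> 2 * \<bar>exp (2 * rho tp) * energy tp\<bar> * exp (- 2 * rho t)
        + (2 * B\<^sup>2 + 2 * (B + norm zs)\<^sup>2) * (eps t)\<^sup>2"
      using velocity_sq_bound[OF sq_plus_deriv_nonneg B that] deviation
      by (simp add: algebra_simps)
    also have "\<dots> \<le> K * (exp (- 2 * rho t) + (eps t)\<^sup>2)"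
      unfolding K_def by (simp add: algebra_simps)
    finally show ?thesis .
  qed
  then show ?thesis
    by (intro bigoI[where c = K] eventually_mono[OF eventually_ge_at_top[of tp]])
       (simp add: add_pos_nonneg)
qed

lemma operator_deviation_norm_eq:
  assumes "t0 \<le> t"
  shows "norm (T (Z t) - T (Zt t)) = norm (Z' t + eps t *\<^sub>R (Z t - Zt t))"
proof -
  have "T (Zt t) = - eps t *\<^sub>R Zt t"
    using regularized_zero[OF assms] by (simp add: eq_neg_iff_add_eq_0)
  then have "T (Z t) - T (Zt t) = - (Z' t + eps t *\<^sub>R (Z t - Zt t))"
    by (simp add: velocity_eq[OF assms] algebra_simps)
  then show ?thesis by (metis norm_minus_cancel)
qed

lemma operator_deviation_bigo:
  "(\<lambda>t. (norm (T (Z t) - T (Zt t)))\<^sup>2) \<in> O[at_top](\<lambda>t. exp (- 2 * rho t) + (eps t)\<^sup>2)"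
proof -
  have "\<forall>\<^sub>F t in at_top. (norm (Z' t + eps t *\<^sub>R (Z t - Zt t)))\<^sup>2 = (norm (T (Z t) - T (Zt t)))\<^sup>2"
    using eventually_ge_at_top[of t0] by eventually_elim (simp add: operator_deviation_norm_eq)
  from landau_o.big.in_cong[OF this] velocity_deviation_bigo show ?thesis by blast
qed

end

end

end

theorem theorem4p5:
  fixes f :: "'a::{real_inner, complete_space} \<Rightarrow> real"
    and gf :: "'a \<Rightarrow> 'a"
    and A :: "'a \<Rightarrow> 'b::{real_inner, complete_space}"
    and Astar :: "'b \<Rightarrow> 'a"
    and b :: 'b
    and eps eps' eps'' :: "real \<Rightarrow> real"
    and t0 tplus :: real
    and x x' :: "real \<Rightarrow> 'a" and l l' :: "real \<Rightarrow> 'b"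
    and xt :: "real \<Rightarrow> 'a" and lt :: "real \<Rightarrow> 'b"
  assumes f_convex: "convex_on UNIV f"
    and f_grad: "\<And>z. (f has_derivative (\<lambda>h. inner (gf z) h)) (at z)"
    and gf_cont: "continuous_on UNIV gf"
    and gf_lip: "\<And>B. bounded B \<Longrightarrow> \<exists>L. L-lipschitz_on B gf"
    and A_lin: "bounded_linear A"
    and A_adj: "\<And>u v. inner (A u) v = inner u (Astar v)"
    and t0_nonneg: "t0 \<ge> 0"
    and eps_pos: "\<And>t. t \<ge> t0 \<Longrightarrow> eps t > 0"
    and eps_d1: "\<And>t. t \<ge> t0 \<Longrightarrow> (eps has_real_derivative eps' t) (at t within {t0..})"
    and eps_d2: "\<And>t. t \<ge> t0 \<Longrightarrow> (eps' has_real_derivative eps'' t) (at t within {t0..})"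
    and eps''_cont: "continuous_on {t0..} eps''"
    and eps_lim: "(eps \<longlongrightarrow> 0) at_top"
    and SM_nonempty: "opt_solutions f A b \<times> lagrange_multipliers f A b \<noteq> {}"
    and x_deriv: "\<And>t. t \<ge> t0 \<Longrightarrow> (x has_vector_derivative x' t) (at t within {t0..})"
    and l_deriv: "\<And>t. t \<ge> t0 \<Longrightarrow> (l has_vector_derivative l' t) (at t within {t0..})"
    and x'_cont: "continuous_on {t0..} x'"
    and l'_cont: "continuous_on {t0..} l'"
    and AHT1: "\<And>t. t \<ge> t0 \<Longrightarrow> x' t + gf (x t) + Astar (l t) + eps t *\<^sub>R x t = 0"
    and AHT2: "\<And>t. t \<ge> t0 \<Longrightarrow> l' t + (b - A (x t)) + eps t *\<^sub>R l t = 0"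
    and zero_Tt: "\<And>t. t \<ge> t0 \<Longrightarrow>
                    opT gf A Astar b (xt t, lt t) + eps t *\<^sub>R (xt t, lt t) = 0"
    and tplus: "tplus \<ge> t0"
    and cond1: "\<And>t. t \<ge> tplus \<Longrightarrow> (eps t)\<^sup>2 + eps' t \<ge> 0"
    and cond2: "\<And>t. t \<ge> tplus \<Longrightarrow> 2 * eps t * eps' t + eps'' t \<le> 0"
  shows "(\<lambda>t. (norm ((x' t, l' t) + eps t *\<^sub>R ((x t, l t) - (xt t, lt t))))\<^sup>2)
           \<in> O[at_top](\<lambda>t. exp (- 2 * integral {t0..t} eps) + (eps t)\<^sup>2)
       \<and> (\<lambda>t. (norm (opT gf A Astar b (x t, l t) - opT gf A Astar b (xt t, lt t)))\<^sup>2)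
           \<in> O[at_top](\<lambda>t. exp (- 2 * integral {t0..t} eps) + (eps t)\<^sup>2)"
proof -
  interpret regularized_monotone_flow "opT gf A Astar b" eps eps' t0
    "\<lambda>t. (x t, l t)" "\<lambda>t. (x' t, l' t)"
  proof
    show "0 \<le> inner (opT gf A Astar b p - opT gf A Astar b q) (p - q)" for p q
      by (rule opT_monotone[OF f_convex f_grad A_lin A_adj])
    show "((\<lambda>t. (x t, l t)) has_vector_derivative (x' t, l' t)) (at t within {t0..})"
      if "t0 \<le> t" for t
      using that by (intro has_vector_derivative_Pair x_deriv l_deriv)
    show "(x' t, l' t) + opT gf A Astar b (x t, l t) + eps t *\<^sub>R (x t, l t) = 0"
      if "t0 \<le> t" for t
      using AHT1[OF that] AHT2[OF that] by (simp add: opT_def zero_prod_def add.assoc)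
  qed (use eps_pos eps_d1 in auto)
  obtain xs ls where "xs \<in> opt_solutions f A b" "ls \<in> lagrange_multipliers f A b"
    using SM_nonempty by auto
  then have zero: "opT gf A Astar b (xs, ls) = 0"
    by (rule opT_saddle_point_zero[OF f_grad A_lin A_adj])
  have sq_plus_deriv_antitone: "(eps v)\<^sup>2 + eps' v \<le> (eps u)\<^sup>2 + eps' u"
    if "tplus \<le> u" "u \<le> v" for u v
    by (rule square_plus_derivative_nonincreasing[OF eps_d1 eps_d2 tplus cond2 that])
  show ?thesis
    using velocity_deviation_bigo[OF tplus sq_plus_deriv_antitone zero zero_Tt cond1]
      operator_deviation_bigo[OF tplus sq_plus_deriv_antitone zero zero_Tt cond1]
    unfolding rho_def by blast
qed

end
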